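(* Let $\mathscr{G}$ be a principal homogeneous groupoid with vertex set $\Lambda$ (exactly one arrow $[a,b]$ from $a$ to $b$ for all $a,b\in\Lambda$), endowed with a pre-braiding $\sigma$, and let $\langle\cdot,\cdot,\cdot\rangle$ be the ternary operation on $\Lambda$ defined by $\sigma([a,b]|[b,c])=[a,\langle a,b,c\rangle]|[\langle a,b,c\rangle,c]$. Then: (i) for all $a,b$, the map $\langle a,b,\cdot\rangle\colon\Lambda\to\Lambda$ is invertible with inverse $\langle b,a,\cdot\rangle$; (ii) for all $b,c$, the map $\langle\cdot,b,c\rangle$ is invertible with inverse $\langle\cdot,c,b\rangle$; (iii) if moreover $\sigma$ is involutive, then $\langle\cdot,b,c\rangle$ also has inverse $\langle b,c,\cdot\rangle$, and hence $\langle c,b,\cdot\rangle=\langle\cdot,b,c\rangle$.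
   Context: For a groupoid $\mathscr{G}$ with vertices $\Lambda$, multiplication $m$ on composable pairs and units $\mathbf{1}_\lambda$, a pre-braiding is a source/target-preserving map $\sigma(x,y)=(x\rightharpoonup y,x\leftharpoonup y)$ on composable pairs such that for all composable $x|y|z$: $\sigma(x,\mathbf{1}_{\mathfrak{t}(x)})=(\mathbf{1}_{\mathfrak{s}(x)},x)$; $\sigma(\mathbf{1}_{\mathfrak{s}(x)},x)=(x,\mathbf{1}_{\mathfrak{t}(x)})$; $x\rightharpoonup yz=(x\rightharpoonup y)((x\leftharpoonup y)\rightharpoonup z)$ and $x\leftharpoonup yz=(x\leftharpoonup y)\leftharpoonup z$; $xy\leftharpoonup z=(x\leftharpoonup(y\rightharpoonup z))(y\leftharpoonup z)$ and $xy\rightharpoonup z=x\rightharpoonup(y\rightharpoonup z)$; $m\circ\sigma=m$. Involutive means $\sigma^2=\mathrm{id}$. In a PH groupoid, $[a,b][b,c]=[a,c]$. *)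

theory Defs
  imports Main
begin

text \<open>The principal homogeneous (PH) groupoid on a vertex set L: the arrows are
  the pairs (a,b) with a,b in L, the arrow [a,b] = (a,b) goes from source a to
  target b, units are (a,a), and (a,b)|(b,c) is composable with product (a,c).\<close>

type_synonym 'a arr = "'a \<times> 'a"
type_synonym 'a braid = "'a arr \<Rightarrow> 'a arr \<Rightarrow> 'a arr \<times> 'a arr"

definition ph_arr :: "'a set \<Rightarrow> 'a arr set" where
  "ph_arr L = L \<times> L"

definition src :: "'a arr \<Rightarrow> 'a" where "src x = fst x"
definition tgt :: "'a arr \<Rightarrow> 'a" where "tgt x = snd x"

definition ph_unit :: "'a \<Rightarrow> 'a arr" where "ph_unit a = (a, a)"

definition ph_mult :: "'a arr \<Rightarrow> 'a arr \<Rightarrow> 'a arr" where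
  "ph_mult x y = (src x, tgt y)"

definition composable :: "'a set \<Rightarrow> 'a arr \<Rightarrow> 'a arr \<Rightarrow> bool" where
  "composable L x y \<longleftrightarrow> x \<in> ph_arr L \<and> y \<in> ph_arr L \<and> tgt x = src y"

definition lharp :: "'a braid \<Rightarrow> 'a arr \<Rightarrow> 'a arr \<Rightarrow> 'a arr" where
  "lharp \<sigma> x y = fst (\<sigma> x y)"

definition rharp :: "'a braid \<Rightarrow> 'a arr \<Rightarrow> 'a arr \<Rightarrow> 'a arr" where
  "rharp \<sigma> x y = snd (\<sigma> x y)"

definition pre_braiding :: "'a set \<Rightarrow> 'a braid \<Rightarrow> bool" where
  "pre_braiding L \<sigma> \<longleftrightarrow>
    \<comment> \<open>sigma maps composable pairs to composable pairs, preserving source and target\<close>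
    (\<forall>x y. composable L x y \<longrightarrow>
        composable L (lharp \<sigma> x y) (rharp \<sigma> x y) \<and>
        src (lharp \<sigma> x y) = src x \<and> tgt (rharp \<sigma> x y) = tgt y) \<and>
    \<comment> \<open>unit axioms\<close>
    (\<forall>x \<in> ph_arr L. \<sigma> x (ph_unit (tgt x)) = (ph_unit (src x), x)) \<and>
    (\<forall>x \<in> ph_arr L. \<sigma> (ph_unit (src x)) x = (x, ph_unit (tgt x))) \<and>
    \<comment> \<open>compatibility with multiplication, for composable x|y|z\<close>
    (\<forall>x y z. composable L x y \<and> composable L y z \<longrightarrow>
        lharp \<sigma> x (ph_mult y z) = ph_mult (lharp \<sigma> x y) (lharp \<sigma> (rharp \<sigma> x y) z) \<and>
        rharp \<sigma> x (ph_mult y z) = rharp \<sigma> (rharp \<sigma> x y) z \<and>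
        rharp \<sigma> (ph_mult x y) z = ph_mult (rharp \<sigma> x (lharp \<sigma> y z)) (rharp \<sigma> y z) \<and>
        lharp \<sigma> (ph_mult x y) z = lharp \<sigma> x (lharp \<sigma> y z)) \<and>
    \<comment> \<open>m \<circ> sigma = m\<close>
    (\<forall>x y. composable L x y \<longrightarrow> ph_mult (lharp \<sigma> x y) (rharp \<sigma> x y) = ph_mult x y)"

definition involutive_braiding :: "'a set \<Rightarrow> 'a braid \<Rightarrow> bool" where
  "involutive_braiding L \<sigma> \<longleftrightarrow>
    (\<forall>x y. composable L x y \<longrightarrow> case_prod \<sigma> (\<sigma> x y) = (x, y))"

definition tern :: "'a braid \<Rightarrow> 'a \<Rightarrow> 'a \<Rightarrow> 'a \<Rightarrow> 'a" where
  "tern \<sigma> a b c = tgt (lharp \<sigma> (a, b) (b, c))"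

end

theory Submission
  imports Defs
begin

text \<open>On a PH groupoid a pre-braiding is determined by the ternary operation, since
  \<open>\<sigma>([a,b]|[b,c]) = [a,\<langle>a,b,c\<rangle>]|[\<langle>a,b,c\<rangle>,c]\<close>. The unit axioms become
  \<open>\<langle>a,b,b\<rangle> = a\<close> and \<open>\<langle>a,a,c\<rangle> = c\<close>, and the two compatibilities of \<open>\<rightharpoonup>\<close> with
  multiplication become \<open>\<langle>\<langle>a,b,c\<rangle>,c,d\<rangle> = \<langle>a,b,d\<rangle>\<close> and \<open>\<langle>a,b,\<langle>b,c,d\<rangle>\<rangle> = \<langle>a,c,d\<rangle>\<close>.
  Specialising the last two to \<open>d = b\<close>, resp. \<open>c = a\<close>, and using the unit laws gives
  the inverses in (i) and (ii). If \<open>\<sigma>\<close> is involutive, applying \<open>\<sigma>\<close> to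
  \<open>[b,s]|[s,y]\<close> with \<open>s = \<langle>b,c,y\<rangle>\<close> gives back \<open>[b,c]|[c,y]\<close>, i.e.
  \<open>\<langle>b,\<langle>b,c,y\<rangle>,y\<rangle> = c\<close>; together with the identities above this yields the symmetry
  \<open>\<langle>b,c,y\<rangle> = \<langle>y,c,b\<rangle>\<close>, from which (iii) follows by (i).\<close>

lemma composable_pairs [simp]:
  "composable L (a, b) (b, c) \<longleftrightarrow> a \<in> L \<and> b \<in> L \<and> c \<in> L"
  by (auto simp: composable_def ph_arr_def src_def tgt_def)

lemma ph_mult_pairs [simp]: "ph_mult (a, b) (b', c) = (a, c)"
  by (simp add: ph_mult_def src_def tgt_def)

locale pre_braided_ph =
  fixes L :: "'a set" and \<sigma> :: "'a braid"
  assumes pre_braiding: "pre_braiding L \<sigma>"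
begin

lemma braid_pairs:
  assumes "a \<in> L" "b \<in> L" "c \<in> L"
  shows "\<sigma> (a, b) (b, c) = ((a, tern \<sigma> a b c), (tern \<sigma> a b c, c))"
    and "tern \<sigma> a b c \<in> L"
proof -
  have "composable L (lharp \<sigma> (a, b) (b, c)) (rharp \<sigma> (a, b) (b, c))"
    and "src (lharp \<sigma> (a, b) (b, c)) = a" and "tgt (rharp \<sigma> (a, b) (b, c)) = c"
    using pre_braiding assms unfolding pre_braiding_def by (auto simp: src_def tgt_def)
  then show "\<sigma> (a, b) (b, c) = ((a, tern \<sigma> a b c), (tern \<sigma> a b c, c))"
    and "tern \<sigma> a b c \<in> L"
    by (auto simp: tern_def lharp_def rharp_def composable_def ph_arr_def src_def tgt_def
        prod_eq_iff)
qed

lemma lharp_pairs: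
  "a \<in> L \<Longrightarrow> b \<in> L \<Longrightarrow> c \<in> L \<Longrightarrow> lharp \<sigma> (a, b) (b, c) = (a, tern \<sigma> a b c)"
  by (simp add: lharp_def braid_pairs)

lemma rharp_pairs:
  "a \<in> L \<Longrightarrow> b \<in> L \<Longrightarrow> c \<in> L \<Longrightarrow> rharp \<sigma> (a, b) (b, c) = (tern \<sigma> a b c, c)"
  by (simp add: rharp_def braid_pairs)

lemma tern_closed: "a \<in> L \<Longrightarrow> b \<in> L \<Longrightarrow> c \<in> L \<Longrightarrow> tern \<sigma> a b c \<in> L"
  by (rule braid_pairs(2))

lemma tern_right_unit:
  assumes "a \<in> L" "b \<in> L"
  shows "tern \<sigma> a b b = a"
proof -
  have "\<sigma> (a, b) (b, b) = ((a, a), (a, b))"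
    using pre_braiding assms unfolding pre_braiding_def
    by (force simp: ph_arr_def ph_unit_def src_def tgt_def)
  then show ?thesis by (simp add: tern_def lharp_def tgt_def)
qed

lemma tern_left_unit:
  assumes "a \<in> L" "c \<in> L"
  shows "tern \<sigma> a a c = c"
proof -
  have "\<sigma> (a, a) (a, c) = ((a, c), (c, c))"
    using pre_braiding assms unfolding pre_braiding_def
    by (force simp: ph_arr_def ph_unit_def src_def tgt_def)
  then show ?thesis by (simp add: tern_def lharp_def tgt_def)
qed

lemma tern_compose_left:
  assumes "a \<in> L" "b \<in> L" "c \<in> L" "d \<in> L"
  shows "tern \<sigma> (tern \<sigma> a b c) c d = tern \<sigma> a b d"
proof -
  have "lharp \<sigma> (a, b) (ph_mult (b, c) (c, d))
      = ph_mult (lharp \<sigma> (a, b) (b, c)) (lharp \<sigma> (rharp \<sigma> (a, b) (b, c)) (c, d))"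
    using pre_braiding assms unfolding pre_braiding_def by simp
  then show ?thesis
    using assms by (simp add: lharp_pairs rharp_pairs tern_closed)
qed

lemma tern_compose_right:
  assumes "a \<in> L" "b \<in> L" "c \<in> L" "d \<in> L"
  shows "tern \<sigma> a b (tern \<sigma> b c d) = tern \<sigma> a c d"
proof -
  have "lharp \<sigma> (ph_mult (a, b) (b, c)) (c, d) = lharp \<sigma> (a, b) (lharp \<sigma> (b, c) (c, d))"
    using pre_braiding assms unfolding pre_braiding_def by simp
  then show ?thesis
    using assms by (simp add: lharp_pairs tern_closed)
qed

lemma tern_inverse_right:
  "a \<in> L \<Longrightarrow> b \<in> L \<Longrightarrow> x \<in> L \<Longrightarrow> tern \<sigma> a b (tern \<sigma> b a x) = x"
  by (simp add: tern_compose_right tern_left_unit)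

lemma tern_inverse_left:
  "x \<in> L \<Longrightarrow> b \<in> L \<Longrightarrow> c \<in> L \<Longrightarrow> tern \<sigma> (tern \<sigma> x b c) c b = x"
  by (simp add: tern_compose_left tern_right_unit)

lemma tern_middle_involutive:
  assumes "involutive_braiding L \<sigma>" "b \<in> L" "c \<in> L" "y \<in> L"
  shows "tern \<sigma> b (tern \<sigma> b c y) y = c"
proof -
  let ?s = "tern \<sigma> b c y"
  have "case_prod \<sigma> (\<sigma> (b, c) (c, y)) = ((b, c), (c, y))"
    using assms unfolding involutive_braiding_def by simp
  then have "\<sigma> (b, ?s) (?s, y) = ((b, c), (c, y))"
    using assms by (simp add: braid_pairs)
  then show ?thesis by (simp add: tern_def lharp_def tgt_def)
qed

lemma tern_symmetric_involutive:
  assumes inv: "involutive_braiding L \<sigma>" and "b \<in> L" "c \<in> L" "y \<in> L"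
  shows "tern \<sigma> b c y = tern \<sigma> y c b"
proof -
  let ?s = "tern \<sigma> b c y"
  have s: "?s \<in> L" using assms by (simp add: tern_closed)
  have "tern \<sigma> c y ?s = tern \<sigma> (tern \<sigma> b ?s y) y ?s"
    using tern_middle_involutive[OF assms] by simp
  also have "\<dots> = b"
    using assms s by (simp add: tern_compose_left tern_right_unit)
  finally have "tern \<sigma> y c (tern \<sigma> c y ?s) = tern \<sigma> y c b" by simp
  then show ?thesis
    using assms s by (simp add: tern_inverse_right)
qed

end

theorem lemma7p11:
  fixes L :: "'a set" and \<sigma> :: "'a braid"
  assumes pb: "pre_braiding L \<sigma>"
  shows "(\<forall>a\<in>L. \<forall>b\<in>L. \<forall>x\<in>L.
            tern \<sigma> a b x \<in> L \<and> tern \<sigma> b a (tern \<sigma> a b x) = x \<and> tern \<sigma> a b (tern \<sigma> b a x) = x)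
       \<and> (\<forall>b\<in>L. \<forall>c\<in>L. \<forall>x\<in>L.
            tern \<sigma> x b c \<in> L \<and> tern \<sigma> (tern \<sigma> x b c) c b = x \<and> tern \<sigma> (tern \<sigma> x c b) b c = x)
       \<and> (involutive_braiding L \<sigma> \<longrightarrow>
            (\<forall>b\<in>L. \<forall>c\<in>L. \<forall>x\<in>L.
               tern \<sigma> b c (tern \<sigma> x b c) = x \<and> tern \<sigma> (tern \<sigma> b c x) b c = x
               \<and> tern \<sigma> c b x = tern \<sigma> x b c))"
proof -
  interpret pre_braided_ph L \<sigma> by (rule pre_braided_ph.intro) (rule pb)
  show ?thesis
    by (auto simp: tern_closed tern_inverse_right tern_inverse_left tern_symmetric_involutive)
qed

end
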